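(* (Progress.) For every expression $e$ and type $\tau$: if $\varnothing\vdash e:\tau$, then either $e$ is a value or there exists an expression $e'$ with $e\mapsto e'$.
   Context: This concerns the "filtered stepper calculus". Syntax: actions $a ::= \mathsf{skip} \mid \mathsf{step}$; gas $g ::= \mathsf{one} \mid \mathsf{all}$; priorities $l \in \mathbb{N}$. Patterns $p ::= x \mid p(p) \mid \lambda x.p \mid p+p \mid \underline{n} \mid \$e \mid \$v$ (the pattern typing rules also admit $\mathrm{fix}\,x.p$). A filter is a triple $f=(p,a,g)$. Expressions $e ::= x \mid e(e) \mid \lambda x.e \mid \mathrm{fix}\,x.e \mid e+e \mid \underline{n} \mid \mathrm{filter}_f(e) \mid \langle e\rangle^{a,g,l}$ (the last is called a residue), taken up to $\alpha$-equivalence; $\underline{n}$ ranges over numerals. Evaluation contexts $\mathcal{E} ::= \circ \mid \mathcal{E}(e) \mid e(\mathcal{E}) \mid \mathcal{E}+e \mid e+\mathcal{E} \mid \mathrm{filter}_f(\mathcal{E}) \mid \langle \mathcal{E}\rangle^{a,g,l}$, with exactly one hole; $\mathcal{E}[e]$ is the result of plugging $e$ into the hole. The values are exactly $\lambda x.e$ and numerals $\underline{n}$ (fixpoints, filters and residues are never values). Substitution $[v/x]e$ is standard capture-avoiding substitution, which passes through residues unchanged, through filters (substituting also into the filter's pattern), and stops at binders $\lambda x$ and $\mathrm{fix}\,x$ of the same variable. Decomposition $e = \mathcal{E}[e_0]$ (with $e_0$ a redex) is the non-deterministic relation: $\langle v\rangle^{a,g,l}$ and $\mathrm{filter}_f(v)$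 with $v$ a value decompose as hole $\circ$ with redex themselves; if $e$ decomposes as $\mathcal{E}$ and $e_0$ then $\langle e\rangle^{a,g,l}$ decomposes as $\langle\mathcal{E}\rangle^{a,g,l}$ and $e_0$, and $\mathrm{filter}_f(e)$ as $\mathrm{filter}_f(\mathcal{E})$ and $e_0$; $e_1(e_2)$ decomposes as $\mathcal{E}_1(e_2)$ if $e_1$ decomposes as $\mathcal{E}_1$, as $e_1(\mathcal{E}_2)$ if $e_1$ is a value and $e_2$ decomposes as $\mathcal{E}_2$, and as $\circ$ with redex $e_1(e_2)$ if both are values; identically for $e_1+e_2$; $\mathrm{fix}\,x.e$ decomposes as $\circ$ with redex itself. Instruction transitions $e_0 \to e'$: $(\lambda x.e_1)(v)\to [v/x]e_1$ for a value $v$; $\underline{n_1}+\underline{n_2}\to\underline{n_1+n_2}$; $\mathrm{fix}\,x.e\to[\mathrm{fix}\,x.e/x]e$; $\langle v\rangle^{a,g,l}\to v$ and $\mathrm{filter}_f(v)\to v$ for a value $v$. Unfiltered step: $e\mapsto e'$ holds if $e=\mathcal{E}_0[e_0]$ is a decomposition, $e_0\to e_0'$, and $e'=\mathcal{E}_0[e_0']$. Typing: types $\tau ::= \mathbb{N}\mid \tau\to\tau$. $\Gamma\vdash e:\tau$ is given by the usual Curry-style simply-typed rules: variables from $\Gamma$; $\lambda x.e : \tau_x\to\tau_e$ if $\Gamma,x{:}\tau_x\vdash e:\tau_e$; application; numerals have type $\mathbb{N}$; $e_1+e_2:\mathbb{N}$ if both summands have type $\mathbb{N}$; $\mathrm{fix}\,x.e:\tau$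 if $\Gamma,x{:}\tau\vdash e:\tau$; $\mathrm{filter}_{(p,a,g)}(e):\tau_e$ if $\Gamma\vdash p:\tau_p$ for some $\tau_p$ and $\Gamma\vdash e:\tau_e$; $\langle e\rangle^{a,g,l}:\tau$ if $\Gamma\vdash e:\tau$. Pattern typing $\Gamma\vdash p:\tau$: $\$e$ and $\$v$ have every type; variables, $\lambda$, application, numerals, addition and $\mathrm{fix}$ are typed by the analogous rules. $\varnothing$ is the empty context. *)

theory Defs
  imports Main
begin

text \<open>Filtered stepper calculus. Variables are de Bruijn indices, so terms are
  identified up to alpha-equivalence.\<close>

datatype action = Skip | Step
datatype gas = One | All

datatype pat =
    PVar nat
  | PApp pat pat
  | PLam pat
  | PPlus pat pat
  | PNum nat
  | PAnyExp
  | PAnyVal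
  | PFix pat

type_synonym filt = "pat \<times> action \<times> gas"

datatype exp =
    Var nat
  | App exp exp
  | Lam exp
  | Fix exp
  | Plus exp exp
  | Num nat
  | Filter filt exp
  | Residue exp action gas nat

datatype ctx =
    Hole
  | CAppL ctx exp
  | CAppR exp ctx
  | CPlusL ctx exp
  | CPlusR exp ctx
  | CFilter filt ctx
  | CResidue ctx action gas nat

fun plug :: "ctx \<Rightarrow> exp \<Rightarrow> exp" where
  "plug Hole e = e"
| "plug (CAppL E e2) e = App (plug E e) e2"
| "plug (CAppR e1 E) e = App e1 (plug E e)"
| "plug (CPlusL E e2) e = Plus (plug E e) e2"
| "plug (CPlusR e1 E) e = Plus e1 (plug E e)"
| "plug (CFilter f E) e = Filter f (plug E e)"
| "plug (CResidue E a g l) e = Residue (plug E e) a g l"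

fun is_val :: "exp \<Rightarrow> bool" where
  "is_val (Lam _) = True"
| "is_val (Num _) = True"
| "is_val _ = False"

fun plift :: "pat \<Rightarrow> nat \<Rightarrow> pat" where
  "plift (PVar i) k = (if i < k then PVar i else PVar (Suc i))"
| "plift (PApp p q) k = PApp (plift p k) (plift q k)"
| "plift (PLam p) k = PLam (plift p (Suc k))"
| "plift (PPlus p q) k = PPlus (plift p k) (plift q k)"
| "plift (PNum n) k = PNum n"
| "plift PAnyExp k = PAnyExp"
| "plift PAnyVal k = PAnyVal"
| "plift (PFix p) k = PFix (plift p (Suc k))"

fun lift :: "exp \<Rightarrow> nat \<Rightarrow> exp" where
  "lift (Var i) k = (if i < k then Var i else Var (Suc i))"
| "lift (App e1 e2) k = App (lift e1 k) (lift e2 k)"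
| "lift (Lam e) k = Lam (lift e (Suc k))"
| "lift (Fix e) k = Fix (lift e (Suc k))"
| "lift (Plus e1 e2) k = Plus (lift e1 k) (lift e2 k)"
| "lift (Num n) k = Num n"
| "lift (Filter (p, a, g) e) k = Filter (plift p k, a, g) (lift e k)"
| "lift (Residue e a g l) k = Residue (lift e k) a g l"

text \<open>Reading of an expression as a pattern (used when substituting an
  expression for a variable occurring in a filter's pattern); filters and
  residues are transparent.\<close>
fun pat_of :: "exp \<Rightarrow> pat" where
  "pat_of (Var i) = PVar i"
| "pat_of (App e1 e2) = PApp (pat_of e1) (pat_of e2)"
| "pat_of (Lam e) = PLam (pat_of e)"
| "pat_of (Fix e) = PFix (pat_of e)"
| "pat_of (Plus e1 e2) = PPlus (pat_of e1) (pat_of e2)"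
| "pat_of (Num n) = PNum n"
| "pat_of (Filter f e) = pat_of e"
| "pat_of (Residue e a g l) = pat_of e"

text \<open>Capture-avoiding substitution of v for index k (indices above k are
  decremented, as the binder for k disappears).\<close>
fun psubst :: "pat \<Rightarrow> nat \<Rightarrow> exp \<Rightarrow> pat" where
  "psubst (PVar i) k v = (if i = k then pat_of v else if k < i then PVar (i - 1) else PVar i)"
| "psubst (PApp p q) k v = PApp (psubst p k v) (psubst q k v)"
| "psubst (PLam p) k v = PLam (psubst p (Suc k) (lift v 0))"
| "psubst (PPlus p q) k v = PPlus (psubst p k v) (psubst q k v)"
| "psubst (PNum n) k v = PNum n"
| "psubst PAnyExp k v = PAnyExp"
| "psubst PAnyVal k v = PAnyVal"
| "psubst (PFix p) k v = PFix (psubst p (Suc k) (lift v 0))"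

fun subst :: "exp \<Rightarrow> nat \<Rightarrow> exp \<Rightarrow> exp" where
  "subst (Var i) k v = (if i = k then v else if k < i then Var (i - 1) else Var i)"
| "subst (App e1 e2) k v = App (subst e1 k v) (subst e2 k v)"
| "subst (Lam e) k v = Lam (subst e (Suc k) (lift v 0))"
| "subst (Fix e) k v = Fix (subst e (Suc k) (lift v 0))"
| "subst (Plus e1 e2) k v = Plus (subst e1 k v) (subst e2 k v)"
| "subst (Num n) k v = Num n"
| "subst (Filter (p, a, g) e) k v = Filter (psubst p k v, a, g) (subst e k v)"
| "subst (Residue e a g l) k v = Residue e a g l"

inductive decomp :: "exp \<Rightarrow> ctx \<Rightarrow> exp \<Rightarrow> bool" where
  d_res_val: "is_val v \<Longrightarrow> decomp (Residue v a g l) Hole (Residue v a g l)"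
| d_filt_val: "is_val v \<Longrightarrow> decomp (Filter f v) Hole (Filter f v)"
| d_res: "decomp e E e0 \<Longrightarrow> decomp (Residue e a g l) (CResidue E a g l) e0"
| d_filt: "decomp e E e0 \<Longrightarrow> decomp (Filter f e) (CFilter f E) e0"
| d_appL: "decomp e1 E e0 \<Longrightarrow> decomp (App e1 e2) (CAppL E e2) e0"
| d_appR: "is_val e1 \<Longrightarrow> decomp e2 E e0 \<Longrightarrow> decomp (App e1 e2) (CAppR e1 E) e0"
| d_app: "is_val e1 \<Longrightarrow> is_val e2 \<Longrightarrow> decomp (App e1 e2) Hole (App e1 e2)"
| d_plusL: "decomp e1 E e0 \<Longrightarrow> decomp (Plus e1 e2) (CPlusL E e2) e0"
| d_plusR: "is_val e1 \<Longrightarrow> decomp e2 E e0 \<Longrightarrow> decomp (Plus e1 e2) (CPlusR e1 E) e0"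
| d_plus: "is_val e1 \<Longrightarrow> is_val e2 \<Longrightarrow> decomp (Plus e1 e2) Hole (Plus e1 e2)"
| d_fix: "decomp (Fix e) Hole (Fix e)"

inductive instr :: "exp \<Rightarrow> exp \<Rightarrow> bool" where
  i_beta: "is_val v \<Longrightarrow> instr (App (Lam e1) v) (subst e1 0 v)"
| i_plus: "instr (Plus (Num n1) (Num n2)) (Num (n1 + n2))"
| i_fix: "instr (Fix e) (subst e 0 (Fix e))"
| i_res: "is_val v \<Longrightarrow> instr (Residue v a g l) v"
| i_filt: "is_val v \<Longrightarrow> instr (Filter f v) v"

definition ustep :: "exp \<Rightarrow> exp \<Rightarrow> bool" (infix "\<longmapsto>" 50) where
  "e \<longmapsto> e' \<longleftrightarrow> (\<exists>E0 e0 e0'. decomp e E0 e0 \<and> instr e0 e0' \<and> e' = plug E0 e0')"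

datatype ty = TNat | TArr ty ty

inductive ptyping :: "ty list \<Rightarrow> pat \<Rightarrow> ty \<Rightarrow> bool" where
  pt_anye: "ptyping \<Gamma> PAnyExp \<tau>"
| pt_anyv: "ptyping \<Gamma> PAnyVal \<tau>"
| pt_var: "i < length \<Gamma> \<Longrightarrow> \<Gamma> ! i = \<tau> \<Longrightarrow> ptyping \<Gamma> (PVar i) \<tau>"
| pt_lam: "ptyping (\<tau>x # \<Gamma>) p \<tau>e \<Longrightarrow> ptyping \<Gamma> (PLam p) (TArr \<tau>x \<tau>e)"
| pt_app: "ptyping \<Gamma> p1 (TArr \<tau>2 \<tau>) \<Longrightarrow> ptyping \<Gamma> p2 \<tau>2 \<Longrightarrow> ptyping \<Gamma> (PApp p1 p2) \<tau>"
| pt_num: "ptyping \<Gamma> (PNum n) TNat"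
| pt_plus: "ptyping \<Gamma> p1 TNat \<Longrightarrow> ptyping \<Gamma> p2 TNat \<Longrightarrow> ptyping \<Gamma> (PPlus p1 p2) TNat"
| pt_fix: "ptyping (\<tau> # \<Gamma>) p \<tau> \<Longrightarrow> ptyping \<Gamma> (PFix p) \<tau>"

inductive typing :: "ty list \<Rightarrow> exp \<Rightarrow> ty \<Rightarrow> bool" where
  t_var: "i < length \<Gamma> \<Longrightarrow> \<Gamma> ! i = \<tau> \<Longrightarrow> typing \<Gamma> (Var i) \<tau>"
| t_lam: "typing (\<tau>x # \<Gamma>) e \<tau>e \<Longrightarrow> typing \<Gamma> (Lam e) (TArr \<tau>x \<tau>e)"
| t_app: "typing \<Gamma> e1 (TArr \<tau>2 \<tau>) \<Longrightarrow> typing \<Gamma> e2 \<tau>2 \<Longrightarrow> typing \<Gamma> (App e1 e2) \<tau>"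
| t_num: "typing \<Gamma> (Num n) TNat"
| t_plus: "typing \<Gamma> e1 TNat \<Longrightarrow> typing \<Gamma> e2 TNat \<Longrightarrow> typing \<Gamma> (Plus e1 e2) TNat"
| t_fix: "typing (\<tau> # \<Gamma>) e \<tau> \<Longrightarrow> typing \<Gamma> (Fix e) \<tau>"
| t_filter: "ptyping \<Gamma> p \<tau>p \<Longrightarrow> typing \<Gamma> e \<tau>e \<Longrightarrow> typing \<Gamma> (Filter (p, a, g) e) \<tau>e"
| t_residue: "typing \<Gamma> e \<tau> \<Longrightarrow> typing \<Gamma> (Residue e a g l) \<tau>"

end

theory Submission
  imports Defs
begin

text \<open>A fixpoint is
  always a redex; a filter or residue either wraps a value, and then is itself a
  redex, or wraps a reducible expression whose decomposition extends through it.
  Application and addition first reduce their arguments from left to right; once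
  both are values, canonical forms make the whole expression
  a beta- or addition-redex.\<close>

lemma canonical_form_arrow:
  assumes "typing \<Gamma> v (TArr \<tau>1 \<tau>2)" and "is_val v"
  obtains e where "v = Lam e"
  using assms by (cases v) (auto elim: typing.cases)

lemma canonical_form_nat:
  assumes "typing \<Gamma> v TNat" and "is_val v"
  obtains n where "v = Num n"
  using assms by (cases v) (auto elim: typing.cases)

definition reducible :: "exp \<Rightarrow> bool" where
  "reducible e \<longleftrightarrow> (\<exists>E e0 e0'. decomp e E e0 \<and> instr e0 e0')"

lemma reducible_iff_ustep: "reducible e \<longleftrightarrow> (\<exists>e'. e \<longmapsto> e')"
  unfolding reducible_def ustep_def by blast

lemma progress_reducible:
  assumes "typing [] e \<tau>"
  shows "is_val e \<or> reducible e"
  using assms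
proof (induction "[] :: ty list" e \<tau> rule: typing.induct)
  case (t_app e1 \<tau>2 \<tau> e2)
  consider "\<not> is_val e1" | "is_val e1" "\<not> is_val e2" | "is_val e1" "is_val e2"
    by blast
  then show ?case
  proof cases
    case 1
    with t_app show ?thesis by (auto simp: reducible_def intro: d_appL)
  next
    case 2
    with t_app show ?thesis by (auto simp: reducible_def intro: d_appR)
  next
    case 3
    moreover obtain b where "e1 = Lam b"
      using canonical_form_arrow t_app 3 by blast
    ultimately show ?thesis unfolding reducible_def by (metis d_app i_beta is_val.simps(1))
  qed
next
  case (t_plus e1 e2)
  consider "\<not> is_val e1" | "is_val e1" "\<not> is_val e2" | "is_val e1" "is_val e2"
    by blast
  then show ?case
  proof cases
    case 1
    with t_plus show ?thesis by (auto simp: reducible_def intro: d_plusL)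
  next
    case 2
    with t_plus show ?thesis by (auto simp: reducible_def intro: d_plusR)
  next
    case 3
    moreover obtain n1 n2 where "e1 = Num n1" and "e2 = Num n2"
      using canonical_form_nat t_plus 3 by metis
    ultimately show ?thesis unfolding reducible_def by (metis d_plus i_plus is_val.simps(2))
  qed
next
  case (t_fix \<tau> e)
  show ?case unfolding reducible_def by (metis d_fix i_fix)
next
  case (t_filter p \<tau>p e \<tau>e a g)
  then show ?case by (auto simp: reducible_def intro: d_filt d_filt_val i_filt)
next
  case (t_residue e \<tau> a g l)
  then show ?case by (auto simp: reducible_def intro: d_res d_res_val i_res)
qed auto

theorem theorem2:
  fixes e :: exp and \<tau> :: ty
  assumes "typing [] e \<tau>"
  shows "is_val e \<or> (\<exists>e'. e \<longmapsto> e')"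
  using progress_reducible[OF assms] by (simp add: reducible_iff_ustep)

end
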